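(* Let $n>2$ and $q>0$ be integers such that $n$ is even or $q$ is odd, and let $p>\max\{n,(q-1)n+1\}$ be a prime. Then $$ \sum_{k=0}^{p-q}\frac{(q)_k^n}{(1)_k^n}H_{q-1}^{(2)}\equiv\sum_{k=0}^{p-q}\frac{(q)_k^n}{(1)_k^n}H_{q+k-1}^{(2)}\equiv\sum_{k=0}^{p-q}\frac{(q)_k^n}{(1)_k^n}H_k^{(2)}\equiv0\pmod{p}. $$
   Context: $(x)_k$ denotes the Pochhammer symbol: $(x)_0=1$ and $(x)_k=x(x+1)\cdots(x+k-1)$ for $k>0$. $H_k^{(m)}=\sum_{j=1}^k 1/j^m$ is the $k$th harmonic number of order $m$ (with $H_0^{(m)}=0$). A congruence between rational numbers modulo $p^m$ means their difference lies in $p^m\mathbb{Z}_{(p)}$, where $\mathbb{Z}_{(p)}$ is the ring of rationals whose denominators are coprime to $p$. *)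

theory Defs
  imports Complex_Main "HOL-Computational_Algebra.Primes"
begin

definition harm_ord :: "nat \<Rightarrow> nat \<Rightarrow> rat" where
  "harm_ord m k = (\<Sum>j=1..k. 1 / (of_nat j) ^ m)"

text \<open>Congruence of rationals modulo an integer M: the difference lies in M * Z_(M),
  i.e. writing x - y = a/b in lowest terms (b > 0), M divides a and b is coprime to M.
  For M = p^m with p prime this is exactly x - y in p^m Z_(p).\<close>
definition rat_cong :: "rat \<Rightarrow> rat \<Rightarrow> int \<Rightarrow> bool" where
  "rat_cong x y M = (let (a, b) = quotient_of (x - y) in M dvd a \<and> coprime b M)"

end

theory Submission
  imports Defs "HOL-Number_Theory.Number_Theory" "HOL-Computational_Algebra.Polynomial"
begin

text \<open>
  Put \<open>m = q - 1\<close>. Then \<open>(q)\<^sub>k / (1)\<^sub>k = binomial (k + m) m\<close>, and \<open>m! binomial (k + m) m\<close> is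
  the product \<open>A(k) = (k + 1) \<cdots> (k + m)\<close>; modulo \<open>p\<close>, \<open>H\<^sub>j\<^sup>(\<^sup>2\<^sup>)\<close> is represented by
  \<open>h(j) = \<Sum>\<^sub>i\<^sub>\<le>\<^sub>j i\<^bsup>p-3\<^esup>\<close>. So all three sums become integer sums over \<open>0 \<le> k \<le> p - 1 - m\<close>.
  A polynomial of degree \<open>< p - 1\<close> sums to \<open>0 mod p\<close> over a complete residue system, and a product
  \<open>\<Prod>\<^sub>l (k + l)\<^bsup>e\<^sub>l\<^esup>\<close> with all \<open>e\<^sub>l \<ge> 1\<close> vanishes at \<open>k = p - m, \<dots>, p - 1\<close>. This gives
  \<open>\<Sum> A(k)\<^sup>n \<equiv> 0\<close>, and, via Fermat, \<open>\<Sum> A(k)\<^sup>n (h(k + m) - h(k)) \<equiv> 0\<close> (degree \<open>mn - 2\<close>).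
  The substitution \<open>k \<mapsto> p - 1 - m - k\<close> fixes \<open>A(k)\<^sup>n\<close> (as \<open>mn\<close> is even) and negates
  \<open>h(k + m) + h(k)\<close>, so \<open>\<Sum> A(k)\<^sup>n (h(k + m) + h(k)) \<equiv> 0\<close> as well; halving the sum and the
  difference of the last two congruences gives the other two claims.
\<close>

definition p_multiple :: "nat \<Rightarrow> rat \<Rightarrow> bool" where
  "p_multiple p x \<longleftrightarrow> (\<exists>a b::int. x = of_int a / of_int b \<and> int p dvd a \<and> \<not> int p dvd b)"

lemma p_multiple_imp_rat_cong:
  assumes p: "prime p" and "p_multiple p x"
  shows "rat_cong x 0 (int p)"
proof -
  obtain a b where x: "x = of_int a / of_int b" and pa: "int p dvd a" and pb: "\<not> int p dvd b"
    using assms(2) unfolding p_multiple_def by blast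
  obtain a' b' where q: "quotient_of x = (a', b')" by (cases "quotient_of x") auto
  have x': "x = of_int a' / of_int b'" and b': "b' > 0" and cop: "coprime a' b'"
    using q quotient_of_div quotient_of_denom_pos quotient_of_coprime by blast+
  have "b \<noteq> 0" using pb by auto
  then have "a * b' = a' * b" using x x' b'
    by (simp add: frac_eq_eq) (metis of_int_eq_iff of_int_mult)
  then have "int p dvd a' * b" using pa by (metis dvd_mult2)
  moreover have pp: "prime (int p)" using p by simp
  ultimately have pa': "int p dvd a'" using pb prime_dvd_mult_iff by blast
  have "\<not> int p dvd b'"
  proof
    assume "int p dvd b'"
    then have "int p dvd gcd a' b'" using pa' by simp
    then show False using cop pp by (simp add: not_prime_unit)
  qed
  then have "coprime b' (int p)" using pp prime_imp_coprime coprime_commute by blast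
  then show ?thesis unfolding rat_cong_def using q pa' by simp
qed

lemma p_multiple_of_int: "prime p \<Longrightarrow> int p dvd a \<Longrightarrow> p_multiple p (of_int a)"
  unfolding p_multiple_def by (rule exI[of _ a], rule exI[of _ 1]) (auto simp: prime_gt_1_nat)

lemma p_multiple_add:
  assumes p: "prime p" and "p_multiple p x" "p_multiple p y"
  shows "p_multiple p (x + y)"
proof -
  obtain a b where x: "x = of_int a / of_int b" and pa: "int p dvd a" and pb: "\<not> int p dvd b"
    using assms(2) unfolding p_multiple_def by blast
  obtain c d where y: "y = of_int c / of_int d" and pc: "int p dvd c" and pd: "\<not> int p dvd d"
    using assms(3) unfolding p_multiple_def by blast
  have "b \<noteq> 0" "d \<noteq> 0" using pb pd by auto
  then have "x + y = of_int (a * d + c * b) / of_int (b * d)" using x y by (simp add: field_simps)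
  moreover have "int p dvd a * d + c * b" using pa pc by simp
  moreover have "\<not> int p dvd b * d" using pb pd p by (simp add: prime_dvd_mult_iff)
  ultimately show ?thesis unfolding p_multiple_def by blast
qed

lemma p_multiple_sum:
  "prime p \<Longrightarrow> (\<And>i. i \<in> A \<Longrightarrow> p_multiple p (f i)) \<Longrightarrow> p_multiple p (\<Sum>i\<in>A. f i)"
  by (induction A rule: infinite_finite_induct)
    (auto simp: p_multiple_add p_multiple_of_int[of p 0, simplified])

lemma p_multiple_mult_of_int:
  assumes "p_multiple p x"
  shows "p_multiple p (of_int c * x)"
proof -
  obtain a b where "x = of_int a / of_int b" "int p dvd a" "\<not> int p dvd b"
    using assms unfolding p_multiple_def by blast
  then have "of_int c * x = of_int (c * a) / of_int b" "int p dvd c * a" by simp_all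
  then show ?thesis using \<open>\<not> int p dvd b\<close> unfolding p_multiple_def by blast
qed

lemma prime_dvd_sum_powers:
  assumes p: "prime p"
  shows "e < p - 1 \<Longrightarrow> int p dvd (\<Sum>k<p. int k ^ e)"
proof (induction e rule: less_induct)
  case (less e)
  define S where "S i = (\<Sum>k<p. int k ^ i)" for i
  have "int p ^ Suc e = (\<Sum>k<p. int (Suc k) ^ Suc e - int k ^ Suc e)"
    using sum_lessThan_telescope[of "\<lambda>k. int k ^ Suc e" p] by simp
  also have "\<dots> = (\<Sum>k<p. \<Sum>i<Suc e. of_nat (Suc e choose i) * int k ^ i)"
  proof (intro sum.cong refl)
    fix k
    have "int (Suc k) ^ Suc e = (\<Sum>i\<le>Suc e. of_nat (Suc e choose i) * int k ^ i)"
      using binomial_ring[of "int k" 1 "Suc e"] by (simp add: add.commute)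
    then show "int (Suc k) ^ Suc e - int k ^ Suc e = (\<Sum>i<Suc e. of_nat (Suc e choose i) * int k ^ i)"
      by (simp add: lessThan_Suc_atMost[symmetric] del: power_Suc)
  qed
  also have "\<dots> = (\<Sum>i<e. of_nat (Suc e choose i) * S i) + of_nat (Suc e) * S e"
    unfolding S_def by (subst sum.swap) (simp add: sum_distrib_left)
  finally have expand: "int p ^ Suc e = (\<Sum>i<e. of_nat (Suc e choose i) * S i) + of_nat (Suc e) * S e" .
  have "int p dvd (\<Sum>i<e. of_nat (Suc e choose i) * S i)"
    using less by (intro dvd_sum) (auto simp: S_def)
  moreover have "int p dvd int p ^ Suc e" by simp
  ultimately have "int p dvd of_nat (Suc e) * S e" using expand by (metis dvd_add_right_iff)
  moreover have "\<not> int p dvd of_nat (Suc e)"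
    using less.prems by (auto simp del: of_nat_Suc dest: dvd_imp_le)
  ultimately show ?case using p by (simp add: S_def prime_dvd_mult_iff)
qed

lemma prime_dvd_sum_poly:
  assumes p: "prime p" and deg: "degree F < p - 1"
  shows "int p dvd (\<Sum>k<p. poly F (int k))"
proof -
  have "(\<Sum>k<p. poly F (int k)) = (\<Sum>i\<le>degree F. coeff F i * (\<Sum>k<p. int k ^ i))"
    by (simp add: poly_altdef sum_distrib_left) (rule sum.swap)
  also have "int p dvd \<dots>"
    using deg prime_dvd_sum_powers[OF p] by (intro dvd_sum) auto
  finally show ?thesis .
qed

lemma prime_dvd_sum_prod_shifted_powers:
  assumes p: "prime p" and m: "m < p" and deg: "(\<Sum>l=1..m. e l) < p - 1"
    and e: "\<And>l. l \<in> {1..m} \<Longrightarrow> e l \<ge> 1"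
  shows "int p dvd (\<Sum>k=0..p-1-m. \<Prod>l=1..m. (int k + int l) ^ e l)"
proof -
  define F where "F = (\<Prod>l=1..m. [:int l, 1:] ^ e l)"
  have poly_F: "poly F x = (\<Prod>l=1..m. (x + int l) ^ e l)" for x
    unfolding F_def by (simp add: poly_prod add.commute)
  have "degree F \<le> (\<Sum>l=1..m. degree ([:int l, 1:] ^ e l))"
    unfolding F_def using degree_prod_sum_le[of "{1..m}"] by (simp add: o_def)
  also have "\<dots> \<le> (\<Sum>l=1..m. e l)"
    by (intro sum_mono) (use degree_power_le[of "[:int _, 1:]"] in simp)
  finally have "int p dvd (\<Sum>k<p. poly F (int k))"
    using deg prime_dvd_sum_poly[OF p] by simp
  moreover have "(\<Sum>k<p. poly F (int k)) =
      (\<Sum>k=0..<p-m. poly F (int k)) + (\<Sum>k=p-m..<p. poly F (int k))"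
    by (subst sum.atLeastLessThan_concat) (auto simp: atLeast0LessThan)
  moreover have "int p dvd (\<Sum>k=p-m..<p. poly F (int k))"
  proof (intro dvd_sum)
    fix k assume k: "k \<in> {p-m..<p}"
    then have l: "p - k \<in> {1..m}" by auto
    have "int p dvd (int k + int (p - k)) ^ e (p - k)"
      using k e[OF l] by (simp add: of_nat_diff)
    also have "\<dots> dvd poly F (int k)"
      unfolding poly_F using l by (intro dvd_prodI) auto
    finally show "int p dvd poly F (int k)" .
  qed
  moreover have "{0..<p-m} = {0..p-1-m}" using m by auto
  ultimately show ?thesis by (simp add: poly_F dvd_add_left_iff)
qed

text \<open>Since \<open>i\<^sup>-\<^sup>2 \<equiv> i\<^bsup>p-3\<^esup> (mod p)\<close> for \<open>p \<nmid> i\<close>, this integer represents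
  \<open>H\<^sub>j\<^sup>(\<^sup>2\<^sup>)\<close> modulo \<open>p\<close> whenever \<open>j < p\<close>.\<close>

definition harm2_int :: "nat \<Rightarrow> nat \<Rightarrow> int" where
  "harm2_int p j = (\<Sum>i=1..j. int i ^ (p - 3))"

lemma harm2_int_Suc: "harm2_int p (Suc j) = harm2_int p j + int (Suc j) ^ (p - 3)"
  unfolding harm2_int_def by simp

lemma harm2_int_add: "harm2_int p (k + j) = harm2_int p k + (\<Sum>i=1..j. int (k + i) ^ (p - 3))"
  by (induction j) (simp_all add: harm2_int_Suc algebra_simps)

lemma p_multiple_harm_ord_2_diff:
  assumes p: "prime p" and p3: "3 \<le> p" and j: "j < p"
  shows "p_multiple p (harm_ord 2 j - of_int (harm2_int p j))"
proof -
  have "harm_ord 2 j - of_int (harm2_int p j) = (\<Sum>i=1..j. 1 / of_nat i ^ 2 - of_int (int i ^ (p - 3)))"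
    unfolding harm_ord_def harm2_int_def by (simp add: sum_subtractf)
  also have "p_multiple p \<dots>"
  proof (rule p_multiple_sum[OF p])
    fix i assume i: "i \<in> {1..j}"
    then have "\<not> p dvd i" using j by (auto dest: dvd_imp_le)
    then have "[int i ^ (p - 1) = 1] (mod int p)"
      using fermat_theorem[OF p] by (metis cong_int_iff of_nat_1 of_nat_power)
    then have "int p dvd 1 - int i ^ (p - 1)" by (metis cong_iff_dvd_diff cong_sym)
    moreover have "\<not> int p dvd int i ^ 2"
      using \<open>\<not> p dvd i\<close> p
      by (metis int_dvd_int_iff of_nat_power prime_dvd_power_nat pos2 prime_dvd_power)
    moreover have "p - 3 + 2 = p - 1" using p3 by simp
    then have "int i ^ (p - 3) * int i ^ 2 = int i ^ (p - 1)" by (metis power_add)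
    then have "1 / of_nat i ^ 2 - of_int (int i ^ (p - 3)) =
        (of_int (1 - int i ^ (p - 1)) / of_int (int i ^ 2) :: rat)"
      using i by (simp add: field_simps) (metis of_int_of_nat_eq of_int_mult of_int_power)
    ultimately show "p_multiple p (1 / of_nat i ^ 2 - of_int (int i ^ (p - 3)))"
      unfolding p_multiple_def by blast
  qed
  finally show ?thesis .
qed

lemma harm2_int_reflect:
  assumes p: "prime p" and p5: "5 \<le> p"
  shows "j \<le> p - 1 \<Longrightarrow> [harm2_int p (p - 1 - j) = - harm2_int p j] (mod int p)"
proof (induction j)
  case 0
  have "{..<p} = insert 0 {1..p-1}" using p5 by auto
  then have "harm2_int p (p - 1) = (\<Sum>k<p. int k ^ (p - 3))"
    unfolding harm2_int_def using p5 by simp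
  then show ?case using prime_dvd_sum_powers[OF p, of "p - 3"] p5
    by (simp add: harm2_int_def cong_0_iff)
next
  case (Suc j)
  have "even (p - 3)" using p p5 prime_odd_nat by simp
  have "[int (p - 1 - j) = - int (Suc j)] (mod int p)"
    using Suc.prems by (simp add: cong_iff_dvd_diff of_nat_diff)
  then have "[int (p - 1 - j) ^ (p - 3) = (- int (Suc j)) ^ (p - 3)] (mod int p)"
    by (rule cong_pow)
  then have "[int (p - 1 - j) ^ (p - 3) = int (Suc j) ^ (p - 3)] (mod int p)"
    by (simp only: power_minus_even[OF \<open>even (p - 3)\<close>])
  moreover have "harm2_int p (p - 1 - j) = harm2_int p (p - 1 - Suc j) + int (p - 1 - j) ^ (p - 3)"
    using harm2_int_Suc[of p "p - 1 - Suc j"] Suc.prems by (simp add: Suc_diff_Suc)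
  moreover have "[harm2_int p (p - 1 - j) = - harm2_int p j] (mod int p)"
    using Suc by simp
  ultimately have "[harm2_int p (p - 1 - Suc j) = - harm2_int p j - int (Suc j) ^ (p - 3)] (mod int p)"
    using cong_diff by fastforce
  then show ?case by (simp add: harm2_int_Suc)
qed

definition rising_prod :: "nat \<Rightarrow> nat \<Rightarrow> int" where
  "rising_prod m k = (\<Prod>l=1..m. int k + int l)"

lemma rising_prod_eq_binomial: "rising_prod m k = fact m * int ((k + m) choose m)"
proof (induction m)
  case 0
  then show ?case by (simp add: rising_prod_def)
next
  case (Suc m)
  have "rising_prod (Suc m) k = rising_prod m k * int (Suc (k + m))"
    unfolding rising_prod_def by simp
  also have "\<dots> = fact m * int (Suc (k + m) * ((k + m) choose m))"
    by (simp add: Suc algebra_simps)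
  also have "\<dots> = fact m * int ((Suc (k + m) choose Suc m) * Suc m)"
    by (simp only: Suc_times_binomial_eq)
  also have "\<dots> = fact (Suc m) * int (Suc (k + m) choose Suc m)"
    by (simp add: algebra_simps)
  finally show ?case by simp
qed

lemma rising_prod_reflect:
  assumes m: "m < p" and k: "k \<le> p - 1 - m"
  shows "[rising_prod m (p - 1 - m - k) = (-1) ^ m * rising_prod m k] (mod int p)"
proof -
  have "rising_prod m (p - 1 - m - k) = (\<Prod>l=1..m. int (p - 1 - m - k) + int (m + 1 - l))"
    unfolding rising_prod_def by (subst prod.atLeastAtMost_rev) simp
  also have "\<dots> = (\<Prod>l=1..m. int p - (int k + int l))"
    using m k by (intro prod.cong) (auto simp: of_nat_diff)
  also have "[\<dots> = (\<Prod>l=1..m. - (int k + int l))] (mod int p)"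
    by (intro cong_prod) (simp add: cong_iff_dvd_diff)
  also have "(\<Prod>l=1..m. - (int k + int l)) = (-1) ^ m * rising_prod m k"
    unfolding rising_prod_def prod_uminus by simp
  finally show ?thesis .
qed

lemma prime_dvd_double_imp_dvd:
  assumes "prime p" "2 < p" "int p dvd 2 * x"
  shows "int p dvd x"
proof -
  have "\<not> int p dvd 2"
  proof
    assume "int p dvd 2"
    then have "p dvd 2" using int_dvd_int_iff[of p 2] by simp
    then show False using assms(2) by (simp add: dvd_imp_le leD)
  qed
  then show ?thesis using assms by (simp add: prime_dvd_mult_iff)
qed

lemma prime_dvd_sum_antisymmetric:
  fixes g :: "nat \<Rightarrow> int"
  assumes p: "prime p" "2 < p" and anti: "\<And>k. k \<le> N \<Longrightarrow> [g (N - k) = - g k] (mod int p)"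
  shows "int p dvd (\<Sum>k=0..N. g k)"
proof -
  have "(\<Sum>k=0..N. g k) = (\<Sum>k=0..N. g (N - k))"
    by (subst sum.atLeastAtMost_rev) simp
  also have "[\<dots> = (\<Sum>k=0..N. - g k)] (mod int p)"
    using anti by (intro cong_sum) auto
  also have "(\<Sum>k=0..N. - g k) = - (\<Sum>k=0..N. g k)"
    by (rule sum_negf)
  finally have "int p dvd (\<Sum>k=0..N. g k) - - (\<Sum>k=0..N. g k)"
    by (simp only: cong_iff_dvd_diff)
  then have "int p dvd 2 * (\<Sum>k=0..N. g k)"
    by (simp only: diff_minus_eq_add mult_2)
  then show ?thesis using p prime_dvd_double_imp_dvd by blast
qed

lemma prime_dvd_add_diff_imp_dvd:
  assumes p: "prime p" "2 < p" and add: "int p dvd x + y" and diff: "int p dvd x - y"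
  shows "int p dvd x" "int p dvd y"
proof -
  have "(x + y) + (x - y) = 2 * x" "(x + y) - (x - y) = 2 * y" by simp_all
  then have "int p dvd 2 * x" "int p dvd 2 * y"
    using dvd_add[OF add diff] dvd_diff[OF add diff] by simp_all
  then show "int p dvd x" "int p dvd y"
    using prime_dvd_double_imp_dvd[OF p] by blast+
qed

lemma p_multiple_sum_harm_ord_2:
  assumes p: "prime p" "3 \<le> p" and less: "\<And>k. k \<in> A \<Longrightarrow> \<phi> k < p"
    and dvd: "int p dvd (\<Sum>k\<in>A. c k * harm2_int p (\<phi> k))"
  shows "p_multiple p (\<Sum>k\<in>A. of_int (c k) * harm_ord 2 (\<phi> k))"
proof -
  have "(\<Sum>k\<in>A. of_int (c k) * harm_ord 2 (\<phi> k)) = of_int (\<Sum>k\<in>A. c k * harm2_int p (\<phi> k))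
      + (\<Sum>k\<in>A. of_int (c k) * (harm_ord 2 (\<phi> k) - of_int (harm2_int p (\<phi> k))))"
    by (simp add: algebra_simps sum_subtractf)
  also have "p_multiple p \<dots>"
    using p less dvd
    by (intro p_multiple_add p_multiple_of_int p_multiple_sum p_multiple_mult_of_int
        p_multiple_harm_ord_2_diff) auto
  finally show ?thesis .
qed

lemma pochhammer_ratio_eq_binomial:
  "pochhammer (of_nat (Suc m)) k / pochhammer 1 k = (of_nat ((k + m) choose m) :: 'a :: field_char_0)"
proof -
  have "(of_nat ((k + m) choose m) :: 'a) = of_nat ((k + m) choose k)"
    by (simp add: binomial_symmetric[of m "k + m"])
  also have "\<dots> = of_nat (k + m) gchoose k" by (rule binomial_gbinomial)
  also have "\<dots> = pochhammer (of_nat (Suc m)) k / fact k"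
    by (simp add: gbinomial_pochhammer' add.commute)
  finally show ?thesis by (simp add: pochhammer_fact)
qed

locale binomial_power_sums =
  fixes p m n :: nat
  assumes prime: "prime p" and n_ge_3: "3 \<le> n" and n_less: "n < p"
    and mn_less: "m * n + 1 < p" and even_mn: "even (m * n)"
begin

lemma p_ge_5: "5 \<le> p"
proof -
  have "p \<noteq> 4" using prime prime_odd_nat[of 4] by auto
  then show ?thesis using n_ge_3 n_less by simp
qed

lemma m_less: "m < p"
proof -
  have "m \<le> m * n" using n_ge_3 by simp
  then show ?thesis using mn_less by linarith
qed

lemma rising_prod_power: "rising_prod m k ^ n = (\<Prod>l=1..m. (int k + int l) ^ n)"
  unfolding rising_prod_def by (simp add: prod_power_distrib)

lemma dvd_sum_rising_prod_power: "int p dvd (\<Sum>k=0..p-1-m. rising_prod m k ^ n)"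
  unfolding rising_prod_power
  using prime_dvd_sum_prod_shifted_powers[OF prime m_less, of "\<lambda>_. n"] mn_less n_ge_3 by simp

lemma rising_prod_power_reflect:
  assumes k: "k \<le> p - 1 - m"
  shows "[rising_prod m (p - 1 - m - k) ^ n = rising_prod m k ^ n] (mod int p)"
proof -
  have "[rising_prod m (p - 1 - m - k) ^ n = ((-1) ^ m * rising_prod m k) ^ n] (mod int p)"
    using rising_prod_reflect[OF m_less k] by (rule cong_pow)
  moreover have "((-1 :: int) ^ m) ^ n = 1"
    using even_mn by (simp flip: power_mult)
  ultimately show ?thesis by (simp add: power_mult_distrib)
qed

lemma dvd_sum_rising_prod_power_harm_add:
  "int p dvd (\<Sum>k=0..p-1-m. rising_prod m k ^ n * (harm2_int p (k + m) + harm2_int p k))"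
proof (rule prime_dvd_sum_antisymmetric)
  show "prime p" "2 < p" using prime p_ge_5 by simp_all
next
  fix k assume k: "k \<le> p - 1 - m"
  have "p - 1 - m - k + m = p - 1 - k" "p - 1 - m - k = p - 1 - (k + m)"
    using k m_less by simp_all
  then have "[harm2_int p (p - 1 - m - k + m) = - harm2_int p k] (mod int p)"
    "[harm2_int p (p - 1 - m - k) = - harm2_int p (k + m)] (mod int p)"
    using harm2_int_reflect[OF prime p_ge_5] k by simp_all
  then have "[rising_prod m (p - 1 - m - k) ^ n *
        (harm2_int p (p - 1 - m - k + m) + harm2_int p (p - 1 - m - k)) =
      rising_prod m k ^ n * (- harm2_int p k + - harm2_int p (k + m))] (mod int p)"
    by (intro cong_mult rising_prod_power_reflect k cong_add)
  moreover have "rising_prod m k ^ n * (- harm2_int p k + - harm2_int p (k + m)) =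
      - (rising_prod m k ^ n * (harm2_int p (k + m) + harm2_int p k))"
    by (simp add: algebra_simps)
  ultimately show "[rising_prod m (p - 1 - m - k) ^ n *
        (harm2_int p (p - 1 - m - k + m) + harm2_int p (p - 1 - m - k)) =
      - (rising_prod m k ^ n * (harm2_int p (k + m) + harm2_int p k))] (mod int p)"
    by (simp only:)
qed

text \<open>Fermat's little theorem turns the factor \<open>(k + i)\<^bsup>p-3\<^esup>\<close> into \<open>(k + i)\<^sup>-\<^sup>2\<close>, which
  lowers the exponent of \<open>k + i\<close> in \<open>rising_prod m k ^ n\<close> from \<open>n\<close> to \<open>n - 2\<close>.\<close>

lemma rising_prod_power_harm_term_cong:
  assumes i: "i \<in> {1..m}" and k: "k \<le> p - 1 - m"
  shows "[rising_prod m k ^ n * (int k + int i) ^ (p - 3) =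
    (\<Prod>l=1..m. (int k + int l) ^ (if l = i then n - 2 else n))] (mod int p)"
proof -
  define x where "x = int k + int i"
  define P where "P = (\<Prod>l\<in>{1..m}-{i}. (int k + int l) ^ n)"
  have "(\<Prod>l\<in>{1..m}-{i}. (int k + int l) ^ (if l = i then n - 2 else n)) = P"
    unfolding P_def by (intro prod.cong) auto
  then have rhs: "(\<Prod>l=1..m. (int k + int l) ^ (if l = i then n - 2 else n)) = x ^ (n - 2) * P"
    unfolding x_def using i by (simp add: prod.remove)
  have "n + (p - 3) = (n - 2) + (p - 1)" using n_ge_3 p_ge_5 by simp
  then have "x ^ n * x ^ (p - 3) = x ^ (n - 2) * x ^ (p - 1)" by (metis power_add)
  then have lhs: "rising_prod m k ^ n * (int k + int i) ^ (p - 3) = x ^ (n - 2) * P * x ^ (p - 1)"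
    unfolding rising_prod_power P_def using i by (simp add: prod.remove x_def algebra_simps)
  have "\<not> p dvd (k + i)" using i k m_less by (auto dest: dvd_imp_le)
  then have "[(k + i) ^ (p - 1) = 1] (mod p)" by (rule fermat_theorem[OF prime])
  then have "[x ^ (p - 1) = 1] (mod int p)"
    unfolding x_def by (metis cong_int_iff of_nat_1 of_nat_add of_nat_power)
  then have "[x ^ (n - 2) * P * x ^ (p - 1) = x ^ (n - 2) * P * 1] (mod int p)"
    by (intro cong_mult cong_refl)
  then show ?thesis using lhs rhs by simp
qed

lemma dvd_sum_rising_prod_power_harm_diff:
  "int p dvd (\<Sum>k=0..p-1-m. rising_prod m k ^ n * (harm2_int p (k + m) - harm2_int p k))"
proof -
  have "(\<Sum>k=0..p-1-m. rising_prod m k ^ n * (harm2_int p (k + m) - harm2_int p k)) =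
      (\<Sum>k=0..p-1-m. \<Sum>i=1..m. rising_prod m k ^ n * (int k + int i) ^ (p - 3))"
    by (simp add: harm2_int_add sum_distrib_left)
  also have "\<dots> = (\<Sum>i=1..m. \<Sum>k=0..p-1-m. rising_prod m k ^ n * (int k + int i) ^ (p - 3))"
    by (rule sum.swap)
  also have "int p dvd \<dots>"
  proof (rule dvd_sum)
    fix i assume i: "i \<in> {1..m}"
    define e where "e l = (if l = i then n - 2 else n)" for l
    have "(\<Sum>l=1..m. e l) \<le> m * n"
      using sum_bounded_above[of "{1..m}" e n] by (simp add: e_def)
    then have "int p dvd (\<Sum>k=0..p-1-m. \<Prod>l=1..m. (int k + int l) ^ e l)"
      using mn_less n_ge_3
      by (intro prime_dvd_sum_prod_shifted_powers[OF prime m_less]) (auto simp: e_def)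
    moreover have "[(\<Sum>k=0..p-1-m. rising_prod m k ^ n * (int k + int i) ^ (p - 3)) =
        (\<Sum>k=0..p-1-m. \<Prod>l=1..m. (int k + int l) ^ e l)] (mod int p)"
      unfolding e_def by (intro cong_sum rising_prod_power_harm_term_cong[OF i]) auto
    ultimately show "int p dvd (\<Sum>k=0..p-1-m. rising_prod m k ^ n * (int k + int i) ^ (p - 3))"
      by (simp add: cong_dvd_iff)
  qed
  finally show ?thesis .
qed

lemma dvd_sum_rising_prod_power_harm:
  "int p dvd (\<Sum>k=0..p-1-m. rising_prod m k ^ n * harm2_int p (k + m))"
  "int p dvd (\<Sum>k=0..p-1-m. rising_prod m k ^ n * harm2_int p k)"
proof -
  define x where "x = (\<Sum>k=0..p-1-m. rising_prod m k ^ n * harm2_int p (k + m))"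
  define y where "y = (\<Sum>k=0..p-1-m. rising_prod m k ^ n * harm2_int p k)"
  have "int p dvd x + y"
    using dvd_sum_rising_prod_power_harm_add by (simp add: x_def y_def distrib_left sum.distrib)
  moreover have "int p dvd x - y"
    using dvd_sum_rising_prod_power_harm_diff
    by (simp add: x_def y_def right_diff_distrib sum_subtractf)
  moreover have "2 < p" using p_ge_5 by simp
  ultimately have "int p dvd x" "int p dvd y"
    using prime_dvd_add_diff_imp_dvd[OF prime] by blast+
  then show "int p dvd (\<Sum>k=0..p-1-m. rising_prod m k ^ n * harm2_int p (k + m))"
    "int p dvd (\<Sum>k=0..p-1-m. rising_prod m k ^ n * harm2_int p k)"
    unfolding x_def y_def .
qed

lemma dvd_sum_binomial_power_if_rising_prod:
  assumes "int p dvd (\<Sum>k\<in>A. rising_prod m k ^ n * g k)"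
  shows "int p dvd (\<Sum>k\<in>A. int ((k + m) choose m) ^ n * g k)"
proof -
  have "\<not> p dvd fact m" using prime_dvd_fact_iff[OF prime] m_less by simp
  then have "\<not> p dvd fact m ^ n" using prime_dvd_power[OF prime] by blast
  then have "\<not> int p dvd int (fact m ^ n)" by (simp only: int_dvd_int_iff not_False_eq_True)
  then have "\<not> int p dvd fact m ^ n" by simp
  moreover have "(\<Sum>k\<in>A. rising_prod m k ^ n * g k) =
      fact m ^ n * (\<Sum>k\<in>A. int ((k + m) choose m) ^ n * g k)"
    by (simp add: rising_prod_eq_binomial power_mult_distrib sum_distrib_left mult.assoc)
  ultimately show ?thesis using assms prime by (simp add: prime_dvd_mult_iff)
qed

lemma rat_cong_sum_pochhammer_power_harm_ord_2:
  assumes less: "\<And>k. k \<le> p - 1 - m \<Longrightarrow> \<phi> k < p"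
    and dvd: "int p dvd (\<Sum>k=0..p-1-m. rising_prod m k ^ n * harm2_int p (\<phi> k))"
  shows "rat_cong (\<Sum>k=0..p-1-m. (pochhammer (of_nat (Suc m)) k / pochhammer 1 k) ^ n
    * harm_ord 2 (\<phi> k)) 0 (int p)"
proof -
  have ratio: "(pochhammer (of_nat (Suc m)) k / pochhammer 1 k) ^ n
      = (of_int (int ((k + m) choose m) ^ n) :: rat)" for k
    by (subst pochhammer_ratio_eq_binomial) simp
  have "int p dvd (\<Sum>k=0..p-1-m. int ((k + m) choose m) ^ n * harm2_int p (\<phi> k))"
    by (rule dvd_sum_binomial_power_if_rising_prod[OF dvd])
  then have "p_multiple p (\<Sum>k=0..p-1-m. of_int (int ((k + m) choose m) ^ n) * harm_ord 2 (\<phi> k))"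
    using p_ge_5 less by (intro p_multiple_sum_harm_ord_2[OF prime]) auto
  then show ?thesis unfolding ratio by (rule p_multiple_imp_rat_cong[OF prime])
qed

end

theorem lemma2p2:
  fixes n q p :: nat
  assumes "n > 2" and "q > 0" and "even n \<or> odd q"
    and "prime p" and "p > max n ((q - 1) * n + 1)"
  shows "rat_cong (\<Sum>k=0..p-q. (pochhammer (of_nat q) k / pochhammer 1 k) ^ n * harm_ord 2 (q - 1)) 0 (int p)
       \<and> rat_cong (\<Sum>k=0..p-q. (pochhammer (of_nat q) k / pochhammer 1 k) ^ n * harm_ord 2 (q + k - 1)) 0 (int p)
       \<and> rat_cong (\<Sum>k=0..p-q. (pochhammer (of_nat q) k / pochhammer 1 k) ^ n * harm_ord 2 k) 0 (int p)"
proof -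
  obtain m where q: "q = Suc m" using \<open>q > 0\<close> gr0_implies_Suc by blast
  have "even (m * n)" using \<open>even n \<or> odd q\<close> q by auto
  interpret binomial_power_sums p m n
    using assms \<open>even (m * n)\<close> by unfold_locales (simp_all add: q)
  have N: "p - q = p - 1 - m" and shift: "\<And>k. q + k - 1 = k + m" and "q - 1 = m"
    by (simp_all add: q)
  have "int p dvd (\<Sum>k=0..p-1-m. rising_prod m k ^ n * harm2_int p m)"
    using dvd_sum_rising_prod_power by (simp flip: sum_distrib_right)
  then show ?thesis
    unfolding N shift \<open>q - 1 = m\<close> unfolding q
    by (intro conjI rat_cong_sum_pochhammer_power_harm_ord_2)
      (use m_less dvd_sum_rising_prod_power_harm in auto)
qed

end
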